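(* Let $\alpha_1,\beta_1\in\mathbb R$, $\mu_1\in\mathbb C$, and consider the equation $$ i\partial_t\phi+|\phi|^2\partial_{xx}\phi+\alpha_1\phi|\partial_x\phi|^2+\beta_1\overline{\phi}(\partial_x\phi)^2+\mu_1|\phi|^2\phi=0. \qquad (\ast)$$ Let $0<x_1<1$, $\delta>0$, and let $f\in L^\infty([0,\delta];C^{3,1}([-x_1,x_1]))$ be a solution of $(\ast)$ with $f_0=f(0,\cdot)$ satisfying $f_0(0)=0$ and $f_x(0,0)>0$ real, and assume $x_1$ is small enough that $$\Big(\sup_{x\in[-x_1,x_1]}|f_{xx}(0,x)|\Big)\,x_1<\frac{f_x(0,0)}{2}.$$ Set $M=\|f\|_{L^\infty([0,\delta];C^{3,1})}$. Then there is a constant $C>0$ (independent of $f$, $t$, $x$) such that for all $t\in[0,\delta]$ and $|x|\le x_1$, $$|f(t,x)|\le|f_0(x)|\exp(CM^2t)$$ and $$\big|\partial_t(|f(t,x)|^2)\big|\le CM\exp(CM^2\delta)\big(1+(f_x(0,0))^{-1}M\big)^3\big(|f_0(x)|^3+tM^3|f_0(x)|^2\big).$$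
   Context: $C^{3,1}([-x_1,x_1])$ denotes functions on $[-x_1,x_1]$ with Lipschitz third derivative. *)

theory Defs
  imports "HOL-Analysis.Analysis"
begin

definition Ix :: "real \<Rightarrow> real set" where
  "Ix x1 = {-x1..x1}"

definition Dx :: "real \<Rightarrow> (real \<Rightarrow> complex) \<Rightarrow> real \<Rightarrow> complex" where
  "Dx x1 g = (\<lambda>x. vector_derivative g (at x within Ix x1))"

definition C31_on :: "real \<Rightarrow> (real \<Rightarrow> complex) \<Rightarrow> bool" where
  "C31_on x1 g \<longleftrightarrow>
     (\<forall>x\<in>Ix x1. (g has_vector_derivative Dx x1 g x) (at x within Ix x1)) \<and>
     (\<forall>x\<in>Ix x1. (Dx x1 g has_vector_derivative Dx x1 (Dx x1 g) x) (at x within Ix x1)) \<and>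
     (\<forall>x\<in>Ix x1. (Dx x1 (Dx x1 g) has_vector_derivative Dx x1 (Dx x1 (Dx x1 g)) x)
                   (at x within Ix x1)) \<and>
     (\<exists>L. L-lipschitz_on (Ix x1) (Dx x1 (Dx x1 (Dx x1 g))))"

definition C31_norm :: "real \<Rightarrow> (real \<Rightarrow> complex) \<Rightarrow> real" where
  "C31_norm x1 g =
     (SUP x\<in>Ix x1. cmod (g x)) + (SUP x\<in>Ix x1. cmod (Dx x1 g x))
     + (SUP x\<in>Ix x1. cmod (Dx x1 (Dx x1 g) x))
     + (SUP x\<in>Ix x1. cmod (Dx x1 (Dx x1 (Dx x1 g)) x))
     + (SUP p\<in>{(x,y). x \<in> Ix x1 \<and> y \<in> Ix x1 \<and> x \<noteq> y}.
          cmod (Dx x1 (Dx x1 (Dx x1 g)) (fst p) - Dx x1 (Dx x1 (Dx x1 g)) (snd p))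
          / \<bar>fst p - snd p\<bar>)"

definition solves_eq ::
  "real \<Rightarrow> real \<Rightarrow> complex \<Rightarrow> real \<Rightarrow> real \<Rightarrow> (real \<Rightarrow> real \<Rightarrow> complex) \<Rightarrow> bool" where
  "solves_eq \<alpha> \<beta> \<mu> x1 \<delta> f \<longleftrightarrow>
     (\<forall>t\<in>{0..\<delta>}. \<forall>x\<in>Ix x1. \<exists>ft.
        ((\<lambda>s. f s x) has_vector_derivative ft) (at t within {0..\<delta>}) \<and>
        \<i> * ft + complex_of_real ((cmod (f t x))\<^sup>2) * Dx x1 (Dx x1 (f t)) x
        + complex_of_real \<alpha> * f t x * complex_of_real ((cmod (Dx x1 (f t) x))\<^sup>2)
        + complex_of_real \<beta> * cnj (f t x) * (Dx x1 (f t) x)\<^sup>2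
        + \<mu> * complex_of_real ((cmod (f t x))\<^sup>2) * f t x = 0)"

end

(* Write the equation as f_t = i N(f, f_x, f_xx).  Every term of the cubic nonlinearity N
   carries an undifferentiated factor f, so |f_t| <= (1 + |alpha| + |beta| + |mu|) M^2 |f|
   and Gronwall's argument gives the first bound; in particular the zero f(t,0) = 0 persists.
   For the second bound, d/dt |f|^2 = -2 Im (conj f * N): the alpha-term is real and drops
   out, and all other terms are O(M |f|^3) except beta Im ((conj f * f_x)^2).  Taylor
   expansion at the zero shows that conj f * f_x = x |f_x(t,0)|^2 + O(M^2 x^2) is real up to
   second order, and the nondegeneracy of f_0 at the origin gives |f_0 x| >= a |x| / 2, which
   turns the factor x^2 into |f_0 x|^2 / a^2. *)

theory Submission
  imports Defs
begin

lemma norm_diff_le_of_vector_derivative_bound: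
  fixes h :: "real \<Rightarrow> 'a::real_normed_vector"
  assumes "convex S"
    and h': "\<And>y. y \<in> S \<Longrightarrow> (h has_vector_derivative h' y) (at y within S)"
    and B: "\<And>y. y \<in> S \<Longrightarrow> norm (h' y) \<le> B"
    and "x \<in> S" "y \<in> S"
  shows "norm (h x - h y) \<le> B * \<bar>x - y\<bar>"
proof -
  have "norm (h x - h y) \<le> B * norm (x - y)"
  proof (rule differentiable_bound[OF \<open>convex S\<close>, where f' = "\<lambda>y d. d *\<^sub>R h' y"])
    show "(h has_derivative (\<lambda>d. d *\<^sub>R h' y)) (at y within S)" if "y \<in> S" for y
      using h'[OF that] by (simp add: has_vector_derivative_def)
    show "onorm (\<lambda>d. d *\<^sub>R h' y) \<le> B" if "y \<in> S" for y
      using B[OF that] by (simp add: onorm_scaleR_left[OF bounded_linear_ident] onorm_id)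
  qed (use assms in auto)
  then show ?thesis by simp
qed

lemma norm_Taylor2_remainder_le:
  fixes h :: "real \<Rightarrow> 'a::real_normed_vector"
  assumes "convex S"
    and h': "\<And>y. y \<in> S \<Longrightarrow> (h has_vector_derivative h' y) (at y within S)"
    and h'': "\<And>y. y \<in> S \<Longrightarrow> (h' has_vector_derivative h'' y) (at y within S)"
    and B: "\<And>y. y \<in> S \<Longrightarrow> norm (h'' y) \<le> B"
    and "x \<in> S" "y \<in> S"
  shows "norm (h x - h y - (x - y) *\<^sub>R h' y) \<le> B * (x - y)\<^sup>2"
proof -
  let ?T = "closed_segment y x"
  have T: "?T \<subseteq> S"
    using assms by (simp add: closed_segment_subset)
  have "0 \<le> B"
    using B[OF \<open>y \<in> S\<close>] norm_ge_zero order_trans by blast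
  have "norm (h' z - h' y) \<le> B * \<bar>x - y\<bar>" if "z \<in> ?T" for z
  proof -
    have "norm (h' z - h' y) \<le> B * \<bar>z - y\<bar>"
      using norm_diff_le_of_vector_derivative_bound[OF \<open>convex S\<close> h'' B] that T \<open>y \<in> S\<close> by blast
    also have "\<dots> \<le> B * \<bar>x - y\<bar>"
      using dist_in_closed_segment[OF that] \<open>0 \<le> B\<close> by (intro mult_left_mono) (auto simp: dist_real_def)
    finally show ?thesis .
  qed
  then have "norm (h x - h y - (x - y) *\<^sub>R h' y) \<le> norm (x - y) * (B * \<bar>x - y\<bar>)"
    using T by (intro vector_differentiable_bound_linearization[where S = ?T])
      (auto intro: has_vector_derivative_within_subset[OF h'])
  then show ?thesis
    by (simp add: power2_eq_square mult_ac)
qed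

lemma norm_diff_ge_of_second_derivative_bound:
  fixes h :: "real \<Rightarrow> 'a::real_normed_vector"
  assumes "convex S"
    and h': "\<And>y. y \<in> S \<Longrightarrow> (h has_vector_derivative h' y) (at y within S)"
    and h'': "\<And>y. y \<in> S \<Longrightarrow> (h' has_vector_derivative h'' y) (at y within S)"
    and B: "\<And>y. y \<in> S \<Longrightarrow> norm (h'' y) \<le> B"
    and "x \<in> S" "y \<in> S"
  shows "\<bar>x - y\<bar> * norm (h' y) - B * (x - y)\<^sup>2 \<le> norm (h x - h y)"
  using norm_Taylor2_remainder_le[OF assms] norm_triangle_ineq3[of "h x - h y" "(x - y) *\<^sub>R h' y"]
  by simp

lemma norm_le_SUP_of_continuous_on:
  fixes g :: "'a::topological_space \<Rightarrow> 'b::real_normed_vector"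
  assumes "compact S" "continuous_on S g" "y \<in> S"
  shows "norm (g y) \<le> (SUP x\<in>S. norm (g x))"
proof (rule cSUP_upper[OF \<open>y \<in> S\<close>])
  have "compact ((\<lambda>x. norm (g x)) ` S)"
    by (intro compact_continuous_image continuous_on_norm assms)
  then show "bdd_above ((\<lambda>x. norm (g x)) ` S)"
    by (simp add: bounded_imp_bdd_above compact_imp_bounded)
qed

lemma abs_Im_cnj_mult_derivative_le:
  fixes h :: "real \<Rightarrow> complex"
  assumes "convex S"
    and h': "\<And>y. y \<in> S \<Longrightarrow> (h has_vector_derivative h' y) (at y within S)"
    and h'': "\<And>y. y \<in> S \<Longrightarrow> (h' has_vector_derivative h'' y) (at y within S)"
    and M1: "\<And>y. y \<in> S \<Longrightarrow> cmod (h' y) \<le> M"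
    and M2: "\<And>y. y \<in> S \<Longrightarrow> cmod (h'' y) \<le> M"
    and "h y = 0" "x \<in> S" "y \<in> S"
  shows "\<bar>Im (cnj (h x) * h' x)\<bar> \<le> 2 * M\<^sup>2 * (x - y)\<^sup>2"
proof -
  define b where "b = h' y"
  have "cmod b \<le> M"
    using M1 \<open>y \<in> S\<close> by (simp add: b_def)
  have "0 \<le> M"
    using \<open>cmod b \<le> M\<close> norm_ge_zero order_trans by blast
  have h_le: "cmod (h x) \<le> M * \<bar>x - y\<bar>"
    using norm_diff_le_of_vector_derivative_bound[OF \<open>convex S\<close> h' M1 \<open>x \<in> S\<close> \<open>y \<in> S\<close>] \<open>h y = 0\<close>
    by simp
  have h'_le: "cmod (h' x - b) \<le> M * \<bar>x - y\<bar>"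
    using norm_diff_le_of_vector_derivative_bound[OF \<open>convex S\<close> h'' M2] assms by (simp add: b_def)
  have rem_le: "cmod (h x - of_real (x - y) * b) \<le> M * (x - y)\<^sup>2"
    using norm_Taylor2_remainder_le[OF \<open>convex S\<close> h' h'' M2 \<open>x \<in> S\<close> \<open>y \<in> S\<close>] \<open>h y = 0\<close>
    by (simp add: b_def scaleR_conv_of_real)
  \<comment> \<open>Up to second order, \<open>cnj (h x) * h' x\<close> is the real number \<open>(x - y) * \<bar>b\<bar>\<^sup>2\<close>.\<close>
  have split: "cnj (h x) * h' x - of_real ((x - y) * (cmod b)\<^sup>2)
      = cnj (h x) * (h' x - b) + cnj (h x - of_real (x - y) * b) * b"
    using complex_norm_square[of b] by (simp add: algebra_simps)
  have "\<bar>Im (cnj (h x) * h' x)\<bar> = \<bar>Im (cnj (h x) * h' x - of_real ((x - y) * (cmod b)\<^sup>2))\<bar>"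
    by simp
  also have "\<dots> \<le> cmod (cnj (h x) * (h' x - b) + cnj (h x - of_real (x - y) * b) * b)"
    unfolding split by (rule abs_Im_le_cmod)
  also have "\<dots> \<le> cmod (h x) * cmod (h' x - b) + cmod (h x - of_real (x - y) * b) * cmod b"
    by (rule order_trans[OF norm_triangle_ineq]) (simp add: norm_mult del: complex_cnj_diff)
  also have "\<dots> \<le> (M * \<bar>x - y\<bar>) * (M * \<bar>x - y\<bar>) + (M * (x - y)\<^sup>2) * M"
    using h_le h'_le rem_le \<open>cmod b \<le> M\<close> \<open>0 \<le> M\<close> by (intro add_mono mult_mono) auto
  also have "\<dots> = 2 * M\<^sup>2 * (x - y)\<^sup>2"
    by (simp add: power2_eq_square algebra_simps)
  finally show ?thesis .
qed

lemma has_real_derivative_cmod_power2: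
  fixes u :: "real \<Rightarrow> complex"
  assumes "(u has_vector_derivative d) (at t within S)"
  shows "((\<lambda>s. (cmod (u s))\<^sup>2) has_real_derivative 2 * Re (cnj (u t) * d)) (at t within S)"
proof -
  have "((\<lambda>s. u s * cnj (u s)) has_vector_derivative u t * cnj d + d * cnj (u t)) (at t within S)"
    by (intro has_vector_derivative_mult has_vector_derivative_cnj assms)
  then have "((\<lambda>s. Re (u s * cnj (u s))) has_real_derivative Re (u t * cnj d + d * cnj (u t)))
      (at t within S)"
    by (simp add: has_vector_derivative_complex_iff)
  then show ?thesis
    by (simp add: complex_mult_cnj cmod_power2 mult.commute)
qed

lemma cmod_le_exp_of_vector_derivative_le:
  fixes u :: "real \<Rightarrow> complex"
  assumes "0 \<le> c"
    and u': "\<And>s. s \<in> {a..b} \<Longrightarrow> (u has_vector_derivative u' s) (at s within {a..b})"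
    and growth: "\<And>s. s \<in> {a..b} \<Longrightarrow> cmod (u' s) \<le> c * cmod (u s)"
    and t: "t \<in> {a..b}"
  shows "cmod (u t) \<le> cmod (u a) * exp (c * (t - a))"
proof -
  \<comment> \<open>\<open>v\<close> is nonincreasing, since \<open>d/ds \<bar>u\<bar>\<^sup>2 = 2 Re (cnj u * u') \<le> 2 c \<bar>u\<bar>\<^sup>2\<close>.\<close>
  define v where "v s = (cmod (u s))\<^sup>2 * exp (- (2 * c) * (s - a))" for s
  have "continuous_on {a..b} u"
    using u' continuous_on_vector_derivative by blast
  have "v t \<le> v a"
  proof (rule DERIV_nonpos_imp_decreasing_open[of a t v])
    show "a \<le> t"
      using t by simp
    show "continuous_on {a..t} v"
      unfolding v_def using t
      by (intro continuous_intros continuous_on_subset[OF \<open>continuous_on {a..b} u\<close>]) auto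
    fix s assume s: "a < s" "s < t"
    then have "s \<in> {a..b}" "at s within {a..b} = at s"
      using t by (auto intro: at_within_Icc_at)
    then have du: "(u has_vector_derivative u' s) (at s)"
      using u' by metis
    have dexp: "((\<lambda>s. exp (- (2 * c) * (s - a))) has_real_derivative
        exp (- (2 * c) * (s - a)) * (- (2 * c))) (at s)"
      by (auto intro!: derivative_eq_intros)
    have "(v has_real_derivative
        2 * (Re (cnj (u s) * u' s) - c * (cmod (u s))\<^sup>2) * exp (- (2 * c) * (s - a))) (at s)"
      unfolding v_def using DERIV_mult[OF has_real_derivative_cmod_power2[OF du] dexp]
      by (simp add: algebra_simps)
    moreover have "Re (cnj (u s) * u' s) \<le> c * (cmod (u s))\<^sup>2"
    proof -
      have "Re (cnj (u s) * u' s) \<le> cmod (u s) * cmod (u' s)"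
        using complex_Re_le_cmod[of "cnj (u s) * u' s"] by (simp add: norm_mult)
      also have "\<dots> \<le> cmod (u s) * (c * cmod (u s))"
        using growth[OF \<open>s \<in> {a..b}\<close>] by (intro mult_left_mono) auto
      finally show ?thesis
        by (simp add: power2_eq_square mult_ac)
    qed
    then have "2 * (Re (cnj (u s) * u' s) - c * (cmod (u s))\<^sup>2) * exp (- (2 * c) * (s - a)) \<le> 0"
      by (intro mult_nonpos_nonneg[OF mult_nonneg_nonpos]) auto
    ultimately show "\<exists>y. (v has_real_derivative y) (at s) \<and> y \<le> 0"
      by blast
  qed
  then have "(cmod (u t))\<^sup>2 / exp (2 * c * (t - a)) \<le> (cmod (u a))\<^sup>2"
    by (simp add: v_def exp_minus divide_inverse)
  then have "(cmod (u t))\<^sup>2 \<le> (cmod (u a))\<^sup>2 * exp (2 * c * (t - a))"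
    by (simp add: divide_le_eq)
  also have "\<dots> = (cmod (u a) * exp (c * (t - a)))\<^sup>2"
    by (simp add: power2_eq_square algebra_simps flip: exp_add)
  finally have "(cmod (u t))\<^sup>2 \<le> (cmod (u a) * exp (c * (t - a)))\<^sup>2" .
  then show ?thesis
    by (rule power2_le_imp_le) simp
qed

lemma C31_norm_bounds:
  assumes "C31_on x1 g" and "0 < x1" and y: "y \<in> Ix x1"
  shows "cmod (g y) \<le> C31_norm x1 g" and "cmod (Dx x1 g y) \<le> C31_norm x1 g"
    and "cmod (Dx x1 (Dx x1 g) y) \<le> C31_norm x1 g"
proof -
  let ?g3 = "Dx x1 (Dx x1 (Dx x1 g))"
  let ?P = "{(x, y). x \<in> Ix x1 \<and> y \<in> Ix x1 \<and> x \<noteq> y}"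
  let ?q = "\<lambda>p. cmod (?g3 (fst p) - ?g3 (snd p)) / \<bar>fst p - snd p\<bar>"
  obtain L where L: "L-lipschitz_on (Ix x1) ?g3"
    using \<open>C31_on x1 g\<close> by (auto simp: C31_on_def)
  have "continuous_on (Ix x1) g" "continuous_on (Ix x1) (Dx x1 g)"
    "continuous_on (Ix x1) (Dx x1 (Dx x1 g))" "continuous_on (Ix x1) ?g3"
    using \<open>C31_on x1 g\<close> lipschitz_on_continuous_on[OF L]
    by (auto simp: C31_on_def intro: continuous_on_vector_derivative)
  moreover have "compact (Ix x1)"
    by (simp add: Ix_def)
  ultimately have sup: "cmod (g y) \<le> (SUP x\<in>Ix x1. cmod (g x))"
    "cmod (Dx x1 g y) \<le> (SUP x\<in>Ix x1. cmod (Dx x1 g x))"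
    "cmod (Dx x1 (Dx x1 g) y) \<le> (SUP x\<in>Ix x1. cmod (Dx x1 (Dx x1 g) x))"
    "cmod (?g3 y) \<le> (SUP x\<in>Ix x1. cmod (?g3 x))"
    using norm_le_SUP_of_continuous_on y by blast+
  \<comment> \<open>Without the Lipschitz bound the last supremum in \<open>C31_norm\<close> would be a junk value.\<close>
  have "?q p \<le> L" if "p \<in> ?P" for p
    using lipschitz_onD[OF L, of "fst p" "snd p"] that
    by (auto simp: dist_norm divide_le_eq)
  then have "bdd_above (?q ` ?P)"
    by (intro bdd_aboveI2)
  moreover have "(x1, -x1) \<in> ?P"
    using \<open>0 < x1\<close> by (simp add: Ix_def)
  ultimately have "0 \<le> (SUP p\<in>?P. ?q p)"
    by (rule cSUP_upper2) simp
  with sup norm_ge_zero show "cmod (g y) \<le> C31_norm x1 g" "cmod (Dx x1 g y) \<le> C31_norm x1 g"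
    "cmod (Dx x1 (Dx x1 g) y) \<le> C31_norm x1 g"
    unfolding C31_norm_def by (smt (verit))+
qed

definition nonlinearity :: "real \<Rightarrow> real \<Rightarrow> complex \<Rightarrow> complex \<Rightarrow> complex \<Rightarrow> complex \<Rightarrow> complex" where
  "nonlinearity \<alpha> \<beta> \<mu> z p q = of_real ((cmod z)\<^sup>2) * q + of_real \<alpha> * z * of_real ((cmod p)\<^sup>2)
     + of_real \<beta> * cnj z * p\<^sup>2 + \<mu> * of_real ((cmod z)\<^sup>2) * z"

lemma norm_nonlinearity_le:
  assumes "cmod z \<le> M" "cmod p \<le> M" "cmod q \<le> M"
  shows "cmod (nonlinearity \<alpha> \<beta> \<mu> z p q) \<le> (1 + \<bar>\<alpha>\<bar> + \<bar>\<beta>\<bar> + cmod \<mu>) * M\<^sup>2 * cmod z"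
proof -
  have "0 \<le> M"
    using assms(1) norm_ge_zero order_trans by blast
  have "cmod (nonlinearity \<alpha> \<beta> \<mu> z p q) \<le> (cmod z)\<^sup>2 * cmod q + \<bar>\<alpha>\<bar> * cmod z * (cmod p)\<^sup>2
      + \<bar>\<beta>\<bar> * cmod z * (cmod p)\<^sup>2 + cmod \<mu> * (cmod z)\<^sup>2 * cmod z"
    unfolding nonlinearity_def
    by (intro norm_triangle_le add_mono) (simp_all add: norm_mult norm_power)
  also have "\<dots> \<le> cmod z * M\<^sup>2 + \<bar>\<alpha>\<bar> * cmod z * M\<^sup>2 + \<bar>\<beta>\<bar> * cmod z * M\<^sup>2
      + cmod \<mu> * M\<^sup>2 * cmod z"
  proof -
    have "(cmod z)\<^sup>2 * cmod q \<le> cmod z * M\<^sup>2"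
      unfolding power2_eq_square mult.assoc using assms \<open>0 \<le> M\<close>
      by (intro mult_left_mono mult_mono) auto
    moreover have "(cmod p)\<^sup>2 \<le> M\<^sup>2" "(cmod z)\<^sup>2 \<le> M\<^sup>2"
      using assms by (simp_all add: power_mono)
    ultimately show ?thesis
      by (intro add_mono mult_left_mono mult_right_mono) auto
  qed
  also have "\<dots> = (1 + \<bar>\<alpha>\<bar> + \<bar>\<beta>\<bar> + cmod \<mu>) * M\<^sup>2 * cmod z"
    by (simp add: algebra_simps)
  finally show ?thesis .
qed

lemma Im_cnj_mult_nonlinearity:
  "Im (cnj z * nonlinearity \<alpha> \<beta> \<mu> z p q)
     = (cmod z)\<^sup>2 * Im (cnj z * q) + \<beta> * Im ((cnj z * p)\<^sup>2) + (cmod z)\<^sup>2 * (cmod z)\<^sup>2 * Im \<mu>"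
proof -
  have zz: "cnj z * z = of_real ((cmod z)\<^sup>2)"
    by (metis complex_norm_square mult.commute of_real_power)
  have "cnj z * nonlinearity \<alpha> \<beta> \<mu> z p q = of_real ((cmod z)\<^sup>2) * (cnj z * q)
      + of_real \<alpha> * (cnj z * z) * of_real ((cmod p)\<^sup>2) + of_real \<beta> * (cnj z * p)\<^sup>2
      + \<mu> * of_real ((cmod z)\<^sup>2) * (cnj z * z)"
    unfolding nonlinearity_def by (simp add: algebra_simps power2_eq_square)
  also have "\<dots> = of_real ((cmod z)\<^sup>2) * (cnj z * q)
      + of_real (\<alpha> * (cmod z)\<^sup>2 * (cmod p)\<^sup>2) + of_real \<beta> * (cnj z * p)\<^sup>2
      + \<mu> * of_real ((cmod z)\<^sup>2 * (cmod z)\<^sup>2)"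
    unfolding zz by (simp add: algebra_simps)
  finally show ?thesis
    by simp
qed

lemma cubic_majorant:
  fixes E r m b :: real
  assumes "1 \<le> E" "0 \<le> r" "0 \<le> m" "0 \<le> b"
  shows "(1 + m) * E ^ 3 + b * r\<^sup>2 * E \<le> (1 + m + b) * (1 + r) ^ 3 * E ^ 3"
proof -
  have "1 \<le> (1 + r) ^ 3"
    using \<open>0 \<le> r\<close> by (simp add: one_le_power)
  have "r\<^sup>2 \<le> (1 + r)\<^sup>2"
    using \<open>0 \<le> r\<close> by (intro power_mono) auto
  also have "\<dots> \<le> (1 + r) ^ 3"
    using \<open>0 \<le> r\<close> by (intro power_increasing) auto
  finally have "r\<^sup>2 * E \<le> (1 + r) ^ 3 * E ^ 3"
    using \<open>1 \<le> E\<close> \<open>0 \<le> r\<close> power_increasing[of 1 3 E] by (intro mult_mono) auto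
  then have "b * (r\<^sup>2 * E) \<le> b * ((1 + r) ^ 3 * E ^ 3)"
    using \<open>0 \<le> b\<close> by (rule mult_left_mono)
  moreover have "(1 + m) * E ^ 3 * 1 \<le> (1 + m) * E ^ 3 * (1 + r) ^ 3"
    using \<open>1 \<le> (1 + r) ^ 3\<close> \<open>0 \<le> m\<close> \<open>1 \<le> E\<close> by (intro mult_left_mono) auto
  ultimately show ?thesis
    by (simp add: algebra_simps)
qed

locale C31_solution =
  fixes \<alpha> \<beta> :: real and \<mu> :: complex and x1 \<delta> :: real and f :: "real \<Rightarrow> real \<Rightarrow> complex"
  assumes x1_pos: "0 < x1" and \<delta>_pos: "0 < \<delta>"
    and C31: "\<And>t. t \<in> {0..\<delta>} \<Longrightarrow> C31_on x1 (f t)"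
    and bounded_C31_norm: "bounded ((\<lambda>t. C31_norm x1 (f t)) ` {0..\<delta>})"
    and solves: "solves_eq \<alpha> \<beta> \<mu> x1 \<delta> f"
begin

definition M :: real where
  "M = (SUP t\<in>{0..\<delta>}. C31_norm x1 (f t))"

definition K :: real where
  "K = 1 + \<bar>\<alpha>\<bar> + \<bar>\<beta>\<bar> + cmod \<mu>"

lemma norm_derivatives_le_M:
  assumes "t \<in> {0..\<delta>}" "y \<in> Ix x1"
  shows "cmod (f t y) \<le> M" and "cmod (Dx x1 (f t) y) \<le> M" and "cmod (Dx x1 (Dx x1 (f t)) y) \<le> M"
proof -
  have "C31_norm x1 (f t) \<le> M"
    unfolding M_def using assms(1) bounded_imp_bdd_above[OF bounded_C31_norm] by (rule cSUP_upper)
  then show "cmod (f t y) \<le> M" "cmod (Dx x1 (f t) y) \<le> M" "cmod (Dx x1 (Dx x1 (f t)) y) \<le> M"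
    using C31_norm_bounds[OF C31[OF assms(1)] x1_pos assms(2)] by linarith+
qed

lemma M_nonneg: "0 \<le> M"
proof -
  have "cmod (f 0 0) \<le> M"
    using \<delta>_pos x1_pos by (intro norm_derivatives_le_M) (auto simp: Ix_def)
  then show ?thesis
    using norm_ge_zero order_trans by blast
qed

lemma has_space_derivatives:
  assumes "t \<in> {0..\<delta>}"
  shows "\<And>y. y \<in> Ix x1 \<Longrightarrow> (f t has_vector_derivative Dx x1 (f t) y) (at y within Ix x1)"
    and "\<And>y. y \<in> Ix x1 \<Longrightarrow> (Dx x1 (f t) has_vector_derivative Dx x1 (Dx x1 (f t)) y) (at y within Ix x1)"
  using C31[OF assms] by (auto simp: C31_on_def)

lemma has_time_derivative:
  assumes "t \<in> {0..\<delta>}" "x \<in> Ix x1"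
  shows "((\<lambda>s. f s x) has_vector_derivative
      \<i> * nonlinearity \<alpha> \<beta> \<mu> (f t x) (Dx x1 (f t) x) (Dx x1 (Dx x1 (f t)) x)) (at t within {0..\<delta>})"
proof -
  let ?N = "nonlinearity \<alpha> \<beta> \<mu> (f t x) (Dx x1 (f t) x) (Dx x1 (Dx x1 (f t)) x)"
  obtain ft where ft: "((\<lambda>s. f s x) has_vector_derivative ft) (at t within {0..\<delta>})"
    and eq: "\<i> * ft + ?N = 0"
    using solves[unfolded solves_eq_def, rule_format, OF assms]
    unfolding nonlinearity_def by (auto simp: add.assoc)
  have "ft = - \<i> * (\<i> * ft + ?N) + \<i> * ?N"
    by (simp add: algebra_simps flip: mult.assoc)
  with ft eq show ?thesis
    by simp
qed

lemma norm_le_exp: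
  assumes "t \<in> {0..\<delta>}" "x \<in> Ix x1"
  shows "cmod (f t x) \<le> cmod (f 0 x) * exp (K * M\<^sup>2 * t)"
proof -
  have "cmod (f t x) \<le> cmod (f 0 x) * exp (K * M\<^sup>2 * (t - 0))"
  proof (rule cmod_le_exp_of_vector_derivative_le[OF _ has_time_derivative _ assms(1)])
    fix s assume "s \<in> {0..\<delta>}"
    then show "cmod (\<i> * nonlinearity \<alpha> \<beta> \<mu> (f s x) (Dx x1 (f s) x) (Dx x1 (Dx x1 (f s)) x))
        \<le> K * M\<^sup>2 * cmod (f s x)"
      using norm_nonlinearity_le[OF norm_derivatives_le_M[OF _ assms(2)]] by (simp add: norm_mult K_def)
  qed (use assms(2) in \<open>auto simp: K_def\<close>)
  then show ?thesis
    by simp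
qed

lemma vanishes_at_origin:
  assumes "f 0 0 = 0" "t \<in> {0..\<delta>}"
  shows "f t 0 = 0"
  using norm_le_exp[OF assms(2), of 0] assms(1) x1_pos by (simp add: Ix_def)

lemma abs_Im_cnj_mult_Dx_le:
  assumes "f 0 0 = 0" "t \<in> {0..\<delta>}" "x \<in> Ix x1"
  shows "\<bar>Im (cnj (f t x) * Dx x1 (f t) x)\<bar> \<le> 2 * M\<^sup>2 * x\<^sup>2"
  using abs_Im_cnj_mult_derivative_le[OF _ has_space_derivatives[OF assms(2)]
      norm_derivatives_le_M(2,3)[OF assms(2)] vanishes_at_origin[OF assms(1,2)], of x]
    assms(3) x1_pos by (simp add: Ix_def)

lemma vector_derivative_cmod_power2:
  assumes "t \<in> {0..\<delta>}" "x \<in> Ix x1"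
  shows "vector_derivative (\<lambda>s. (cmod (f s x))\<^sup>2) (at t within {0..\<delta>})
    = - 2 * Im (cnj (f t x) * nonlinearity \<alpha> \<beta> \<mu> (f t x) (Dx x1 (f t) x) (Dx x1 (Dx x1 (f t)) x))"
proof -
  let ?N = "nonlinearity \<alpha> \<beta> \<mu> (f t x) (Dx x1 (f t) x) (Dx x1 (Dx x1 (f t)) x)"
  have "((\<lambda>s. (cmod (f s x))\<^sup>2) has_real_derivative 2 * Re (cnj (f t x) * (\<i> * ?N)))
      (at t within {0..\<delta>})"
    by (rule has_real_derivative_cmod_power2[OF has_time_derivative[OF assms]])
  then have "vector_derivative (\<lambda>s. (cmod (f s x))\<^sup>2) (at t within {0..\<delta>})
      = 2 * Re (cnj (f t x) * (\<i> * ?N))"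
    using vector_derivative_within_closed_interval[OF \<delta>_pos assms(1)]
    by (simp add: has_real_derivative_iff_has_vector_derivative)
  also have "\<dots> = - 2 * Im (cnj (f t x) * ?N)"
    by (simp add: mult.left_commute[of "cnj (f t x)" \<i>])
  finally show ?thesis .
qed

lemma abs_vector_derivative_cmod_power2_le:
  assumes "t \<in> {0..\<delta>}" "x \<in> Ix x1"
  shows "\<bar>vector_derivative (\<lambda>s. (cmod (f s x))\<^sup>2) (at t within {0..\<delta>})\<bar>
    \<le> 2 * M * cmod (f t x)
       * ((1 + cmod \<mu>) * (cmod (f t x))\<^sup>2 + 2 * \<bar>\<beta>\<bar> * \<bar>Im (cnj (f t x) * Dx x1 (f t) x)\<bar>)"
proof -
  let ?z = "f t x" and ?p = "Dx x1 (f t) x" and ?q = "Dx x1 (Dx x1 (f t)) x"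
  define F where "F = cmod ?z"
  define J where "J = \<bar>Im (cnj ?z * ?p)\<bar>"
  have "F \<le> M" "cmod ?p \<le> M" "cmod ?q \<le> M"
    using norm_derivatives_le_M[OF assms] by (simp_all add: F_def)
  have q_term: "\<bar>Im (cnj ?z * ?q)\<bar> \<le> F * M"
    using abs_Im_le_cmod[of "cnj ?z * ?q"] \<open>cmod ?q \<le> M\<close>
    by (simp add: F_def norm_mult) (meson mult_left_mono norm_ge_zero order_trans)
  have p_term: "\<bar>Im ((cnj ?z * ?p)\<^sup>2)\<bar> \<le> 2 * (F * M) * J"
  proof -
    have "\<bar>Re (cnj ?z * ?p)\<bar> \<le> F * M"
      using abs_Re_le_cmod[of "cnj ?z * ?p"] \<open>cmod ?p \<le> M\<close>
      by (simp add: F_def norm_mult) (meson mult_left_mono norm_ge_zero order_trans)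
    then show ?thesis
      unfolding J_def Im_power2 abs_mult by (intro mult_left_mono mult_right_mono) auto
  qed
  have "\<bar>Im (cnj ?z * nonlinearity \<alpha> \<beta> \<mu> ?z ?p ?q)\<bar>
      \<le> F\<^sup>2 * \<bar>Im (cnj ?z * ?q)\<bar> + \<bar>\<beta>\<bar> * \<bar>Im ((cnj ?z * ?p)\<^sup>2)\<bar> + F\<^sup>2 * F\<^sup>2 * \<bar>Im \<mu>\<bar>"
    unfolding Im_cnj_mult_nonlinearity F_def
    by (intro order_trans[OF abs_triangle_ineq] add_mono) (simp_all add: abs_mult)
  also have "\<dots> \<le> F\<^sup>2 * (F * M) + \<bar>\<beta>\<bar> * (2 * (F * M) * J) + F\<^sup>2 * F\<^sup>2 * cmod \<mu>"
    using q_term p_term abs_Im_le_cmod[of \<mu>] by (intro add_mono mult_left_mono) auto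
  also have "\<dots> \<le> F\<^sup>2 * (F * M) + \<bar>\<beta>\<bar> * (2 * (F * M) * J) + M * F ^ 3 * cmod \<mu>"
  proof -
    have "F\<^sup>2 * F\<^sup>2 = F * F ^ 3"
      by (simp add: power2_eq_square power3_eq_cube)
    also have "\<dots> \<le> M * F ^ 3"
      using \<open>F \<le> M\<close> by (intro mult_right_mono) (auto simp: F_def)
    finally show ?thesis
      by (intro add_left_mono mult_right_mono) auto
  qed
  also have "\<dots> = M * F * ((1 + cmod \<mu>) * F\<^sup>2 + 2 * \<bar>\<beta>\<bar> * J)"
    by (simp add: algebra_simps power2_eq_square power3_eq_cube)
  finally show ?thesis
    using vector_derivative_cmod_power2[OF assms] by (simp add: abs_mult F_def J_def)
qed

lemma norm_initial_ge:
  assumes "f 0 0 = 0" and a: "Dx x1 (f 0) 0 = of_real a" and "0 < a"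
    and small: "(SUP y\<in>Ix x1. cmod (Dx x1 (Dx x1 (f 0)) y)) * x1 < a / 2"
    and x: "x \<in> Ix x1"
  shows "a * \<bar>x\<bar> \<le> 2 * cmod (f 0 x)"
proof -
  define B where "B = (SUP y\<in>Ix x1. cmod (Dx x1 (Dx x1 (f 0)) y))"
  have "0 \<in> {0..\<delta>}" "0 \<in> Ix x1"
    using \<delta>_pos x1_pos by (auto simp: Ix_def)
  have "continuous_on (Ix x1) (Dx x1 (Dx x1 (f 0)))"
    using C31[OF \<open>0 \<in> {0..\<delta>}\<close>] by (auto simp: C31_on_def intro: continuous_on_vector_derivative)
  then have B: "\<And>y. y \<in> Ix x1 \<Longrightarrow> cmod (Dx x1 (Dx x1 (f 0)) y) \<le> B"
    unfolding B_def by (intro norm_le_SUP_of_continuous_on) (auto simp: Ix_def)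
  have "a * \<bar>x\<bar> - B * x\<^sup>2 \<le> cmod (f 0 x)"
    using norm_diff_ge_of_second_derivative_bound[OF _ has_space_derivatives[OF \<open>0 \<in> {0..\<delta>}\<close>] B x \<open>0 \<in> Ix x1\<close>]
      \<open>f 0 0 = 0\<close> a \<open>0 < a\<close> by (simp add: Ix_def mult.commute)
  moreover have "B * x\<^sup>2 \<le> a * \<bar>x\<bar> / 2"
  proof -
    have "0 \<le> B"
      using B[OF \<open>0 \<in> Ix x1\<close>] norm_ge_zero order_trans by blast
    have "B * x\<^sup>2 = (B * \<bar>x\<bar>) * \<bar>x\<bar>"
      by (simp add: power2_eq_square)
    also have "\<dots> \<le> (B * x1) * \<bar>x\<bar>"
      using x \<open>0 \<le> B\<close> by (intro mult_right_mono mult_left_mono) (auto simp: Ix_def)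
    also have "\<dots> \<le> a / 2 * \<bar>x\<bar>"
      using small by (intro mult_right_mono) (auto simp: B_def)
    finally show ?thesis
      by simp
  qed
  ultimately show ?thesis
    by linarith
qed

lemma abs_Im_cnj_mult_Dx_le_initial:
  assumes "f 0 0 = 0" and "Dx x1 (f 0) 0 = of_real a" and "0 < a"
    and "(SUP y\<in>Ix x1. cmod (Dx x1 (Dx x1 (f 0)) y)) * x1 < a / 2"
    and t: "t \<in> {0..\<delta>}" and x: "x \<in> Ix x1"
  shows "\<bar>Im (cnj (f t x) * Dx x1 (f t) x)\<bar> \<le> 8 * (M / a)\<^sup>2 * (cmod (f 0 x))\<^sup>2"
proof -
  have "\<bar>Im (cnj (f t x) * Dx x1 (f t) x)\<bar> \<le> 2 * M\<^sup>2 * x\<^sup>2"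
    by (rule abs_Im_cnj_mult_Dx_le[OF \<open>f 0 0 = 0\<close> t x])
  also have "\<dots> = 2 * (M / a)\<^sup>2 * (a * \<bar>x\<bar>)\<^sup>2"
    using \<open>0 < a\<close> by (simp add: power_mult_distrib power_divide)
  also have "\<dots> \<le> 2 * (M / a)\<^sup>2 * (2 * cmod (f 0 x))\<^sup>2"
    using norm_initial_ge[OF assms(1-4) x] \<open>0 < a\<close> by (intro mult_left_mono power_mono) auto
  finally show ?thesis
    by (simp add: power_mult_distrib)
qed

lemma abs_vector_derivative_cmod_power2_le_initial:
  assumes "f 0 0 = 0" and "Dx x1 (f 0) 0 = of_real a" and "0 < a"
    and "(SUP y\<in>Ix x1. cmod (Dx x1 (Dx x1 (f 0)) y)) * x1 < a / 2"
    and t: "t \<in> {0..\<delta>}" and x: "x \<in> Ix x1"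
  shows "\<bar>vector_derivative (\<lambda>s. (cmod (f s x))\<^sup>2) (at t within {0..\<delta>})\<bar>
    \<le> 2 * (1 + cmod \<mu> + 16 * \<bar>\<beta>\<bar>) * M * exp (3 * (K * M\<^sup>2 * t))
       * (1 + M / a) ^ 3 * cmod (f 0 x) ^ 3"
proof -
  define F where "F = cmod (f t x)"
  define F0 where "F0 = cmod (f 0 x)"
  define J where "J = \<bar>Im (cnj (f t x) * Dx x1 (f t) x)\<bar>"
  define E where "E = exp (K * M\<^sup>2 * t)"
  define r where "r = M / a"
  define m where "m = cmod \<mu>"
  define b where "b = \<bar>\<beta>\<bar>"
  have "0 \<le> r" "0 \<le> m" "0 \<le> b" "0 \<le> F" "0 \<le> F0" "0 \<le> J"
    using M_nonneg \<open>0 < a\<close> by (simp_all add: r_def m_def b_def F_def F0_def J_def)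
  have "1 \<le> E"
    using t by (simp add: E_def K_def)
  have J_le: "J \<le> 8 * r\<^sup>2 * F0\<^sup>2"
    unfolding J_def r_def F0_def by (rule abs_Im_cnj_mult_Dx_le_initial[OF assms])
  have F_le: "F \<le> F0 * E"
    unfolding F_def F0_def E_def by (rule norm_le_exp[OF t x])
  have "\<bar>vector_derivative (\<lambda>s. (cmod (f s x))\<^sup>2) (at t within {0..\<delta>})\<bar>
      \<le> 2 * M * F * ((1 + m) * F\<^sup>2 + 2 * b * J)"
    using abs_vector_derivative_cmod_power2_le[OF t x] by (simp add: F_def J_def m_def b_def)
  also have "\<dots> \<le> 2 * M * (F0 * E) * ((1 + m) * (F0 * E)\<^sup>2 + 2 * b * (8 * r\<^sup>2 * F0\<^sup>2))"
    using F_le J_le M_nonneg \<open>0 \<le> m\<close> \<open>0 \<le> b\<close> \<open>0 \<le> F\<close> \<open>0 \<le> J\<close>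
    by (intro mult_mono mult_left_mono add_mono power_mono) auto
  also have "\<dots> = 2 * M * F0 ^ 3 * ((1 + m) * E ^ 3 + 16 * b * r\<^sup>2 * E)"
    by (simp add: algebra_simps power2_eq_square power3_eq_cube)
  also have "\<dots> \<le> 2 * M * F0 ^ 3 * ((1 + m + 16 * b) * (1 + r) ^ 3 * E ^ 3)"
    using cubic_majorant[OF \<open>1 \<le> E\<close> \<open>0 \<le> r\<close> \<open>0 \<le> m\<close>, of "16 * b"] M_nonneg \<open>0 \<le> F0\<close> \<open>0 \<le> b\<close>
    by (intro mult_left_mono) auto
  finally show ?thesis
    by (simp add: E_def r_def m_def b_def F0_def algebra_simps flip: exp_of_nat_mult)
qed

lemma estimates_from_initial_data:
  assumes "f 0 0 = 0" and "Im (Dx x1 (f 0) 0) = 0" and "0 < Re (Dx x1 (f 0) 0)"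
    and "(SUP y\<in>Ix x1. cmod (Dx x1 (Dx x1 (f 0)) y)) * x1 < Re (Dx x1 (f 0) 0) / 2"
    and t: "t \<in> {0..\<delta>}" and x: "x \<in> Ix x1"
  defines "a \<equiv> Re (Dx x1 (f 0) 0)"
  shows "cmod (f t x) \<le> cmod (f 0 x) * exp (32 * K * M\<^sup>2 * t)"
    and "\<bar>vector_derivative (\<lambda>s. (cmod (f s x))\<^sup>2) (at t within {0..\<delta>})\<bar>
      \<le> 32 * K * M * exp (32 * K * M\<^sup>2 * \<delta>) * (1 + M / a) ^ 3
         * (cmod (f 0 x) ^ 3 + t * M ^ 3 * (cmod (f 0 x))\<^sup>2)"
proof -
  \<comment> \<open>The factor 32 dominates both \<open>2 * (1 + cmod \<mu> + 16 * \<bar>\<beta>\<bar>) / K\<close> and the 3 in the exponent.\<close>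
  have "1 \<le> K"
    by (simp add: K_def)
  have "Dx x1 (f 0) 0 = of_real a" "0 < a"
    using assms by (simp_all add: a_def complex_eq_iff)
  note initial = abs_vector_derivative_cmod_power2_le_initial[OF \<open>f 0 0 = 0\<close> this _ t x]
  have "exp (K * M\<^sup>2 * t) \<le> exp (32 * K * M\<^sup>2 * t)"
    using t \<open>1 \<le> K\<close> by (intro exp_mono mult_right_mono) auto
  then show "cmod (f t x) \<le> cmod (f 0 x) * exp (32 * K * M\<^sup>2 * t)"
    using norm_le_exp[OF t x] by (meson mult_left_mono norm_ge_zero order_trans)
  define c where "c = 2 * (1 + cmod \<mu> + 16 * \<bar>\<beta>\<bar>)"
  have "c \<le> 32 * K"
    by (simp add: c_def K_def)
  have "3 * (K * M\<^sup>2 * t) \<le> 32 * K * M\<^sup>2 * \<delta>"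
    using t \<open>1 \<le> K\<close> mult_left_mono[of "3 * t" "32 * \<delta>" "K * M\<^sup>2"] by (simp add: ac_simps)
  then have "exp (3 * (K * M\<^sup>2 * t)) \<le> exp (32 * K * M\<^sup>2 * \<delta>)"
    by simp
  moreover have "cmod (f 0 x) ^ 3 \<le> cmod (f 0 x) ^ 3 + t * M ^ 3 * (cmod (f 0 x))\<^sup>2"
    using t M_nonneg by simp
  moreover have "0 \<le> M / a"
    using M_nonneg \<open>0 < a\<close> by simp
  ultimately have "c * M * exp (3 * (K * M\<^sup>2 * t)) * (1 + M / a) ^ 3 * cmod (f 0 x) ^ 3
      \<le> 32 * K * M * exp (32 * K * M\<^sup>2 * \<delta>) * (1 + M / a) ^ 3
         * (cmod (f 0 x) ^ 3 + t * M ^ 3 * (cmod (f 0 x))\<^sup>2)"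
    using M_nonneg \<open>1 \<le> K\<close> \<open>c \<le> 32 * K\<close> by (intro mult_mono) auto
  with initial assms(4) show "\<bar>vector_derivative (\<lambda>s. (cmod (f s x))\<^sup>2) (at t within {0..\<delta>})\<bar>
      \<le> 32 * K * M * exp (32 * K * M\<^sup>2 * \<delta>) * (1 + M / a) ^ 3
         * (cmod (f 0 x) ^ 3 + t * M ^ 3 * (cmod (f 0 x))\<^sup>2)"
    by (simp add: a_def c_def)
qed

end

theorem proposition2p6:
  fixes \<alpha>1 \<beta>1 :: real and \<mu>1 :: complex and x1 \<delta> :: real
  assumes "0 < x1" and "x1 < 1" and "0 < \<delta>"
  shows "\<exists>C>0. \<forall>f :: real \<Rightarrow> real \<Rightarrow> complex.
     (\<forall>t\<in>{0..\<delta>}. C31_on x1 (f t))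
     \<and> bounded ((\<lambda>t. C31_norm x1 (f t)) ` {0..\<delta>})
     \<and> solves_eq \<alpha>1 \<beta>1 \<mu>1 x1 \<delta> f
     \<and> f 0 0 = 0
     \<and> Im (Dx x1 (f 0) 0) = 0 \<and> Re (Dx x1 (f 0) 0) > 0
     \<and> (SUP x\<in>Ix x1. cmod (Dx x1 (Dx x1 (f 0)) x)) * x1 < Re (Dx x1 (f 0) 0) / 2
     \<longrightarrow> (let M = (SUP t\<in>{0..\<delta>}. C31_norm x1 (f t)); a = Re (Dx x1 (f 0) 0) in
          \<forall>t\<in>{0..\<delta>}. \<forall>x\<in>Ix x1.
            cmod (f t x) \<le> cmod (f 0 x) * exp (C * M\<^sup>2 * t)
            \<and> \<bar>vector_derivative (\<lambda>s. (cmod (f s x))\<^sup>2) (at t within {0..\<delta>})\<bar>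
                \<le> C * M * exp (C * M\<^sup>2 * \<delta>) * (1 + M / a) ^ 3
                   * (cmod (f 0 x) ^ 3 + t * M ^ 3 * (cmod (f 0 x))\<^sup>2))"
proof (intro exI[of _ "32 * (1 + \<bar>\<alpha>1\<bar> + \<bar>\<beta>1\<bar> + cmod \<mu>1)"] conjI allI impI, goal_cases)
  case 1
  then show ?case
    by (simp add: add_pos_nonneg)
next
  case (2 f)
  then interpret C31_solution \<alpha>1 \<beta>1 \<mu>1 x1 \<delta> f
    using assms by unfold_locales auto
  from 2 show ?case
    using estimates_from_initial_data unfolding Let_def M_def[symmetric] K_def[symmetric] by auto
qed

end
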